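(* Let $\phi$ be a function mapping every non-empty subset of $\mathbb{R}^2$ to a non-empty subset of $\mathbb{R}^2$ that satisfies Properties 1 and 2 below. Let $T=\{T_1,\dots,T_m\}$ be a set of pairwise non-crossing geometric trees in the plane. Then the $\phi$-cover of $T$ is well-defined: any two executions of the merging process described below on $T$ output the same set $\mathcal{C}$, regardless of the arbitrary choices made.
   Context: A geometric tree is a plane straight-line embedding of a tree in $\mathbb{R}^2$ (viewed as a subset of $\mathbb{R}^2$). Property 1: for every non-empty $A\subseteq\mathbb{R}^2$, $A\subseteq\phi(A)$. Property 2: for all non-empty $A,B\subseteq\mathbb{R}^2$, if $A\subseteq\phi(B)$ then $\phi(A)\subseteq\phi(B)$. The merging process: start with $\mathcal{C}=\{\phi(T_i)\mid 1\le i\le m\}$ (a collection of sets, each tracked as a separate element); while the elements of $\mathcal{C}$ are not pairwise disjoint, choose arbitrarily two distinct elements $C,C'$ of $\mathcal{C}$ with $C\cap C'\neq\emptyset$ and replace them in $\mathcal{C}$ by $\phi(C\cup C')$; when the elements are pairwise disjoint, output $\mathcal{C}$. The output is called the $\phi$-cover of $T$. *)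

theory Defs
  imports "HOL-Analysis.Analysis" "HOL-Library.Multiset"
begin

type_synonym point = "real ^ 2"

text \<open>The underlying abstract graph is a tree
  (connected, with |E| = |V| - 1); edges are drawn as straight segments that meet only in
  common endpoints and do not pass through other vertices.\<close>
definition plane_tree :: "point set \<Rightarrow> point set set \<Rightarrow> bool" where
  "plane_tree V E \<longleftrightarrow>
     finite V \<and> V \<noteq> {} \<and>
     (\<forall>e\<in>E. \<exists>u v. u \<in> V \<and> v \<in> V \<and> u \<noteq> v \<and> e = {u, v}) \<and>
     (\<forall>u\<in>V. \<forall>v\<in>V. (u, v) \<in> {(x, y). {x, y} \<in> E}\<^sup>*) \<and>
     card E = card V - 1 \<and>
     (\<forall>e\<in>E. \<forall>f\<in>E. e \<noteq> f \<longrightarrow> convex hull e \<inter> convex hull f \<subseteq> e \<inter> f) \<and>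
     (\<forall>w\<in>V. \<forall>e\<in>E. w \<in> convex hull e \<longrightarrow> w \<in> e)"

definition geom_tree :: "point set \<Rightarrow> point set set \<Rightarrow> point set" where
  "geom_tree V E = V \<union> \<Union> ((\<lambda>e. convex hull e) ` E)"

definition non_crossing :: "point set \<times> point set set \<Rightarrow> point set \<times> point set set \<Rightarrow> bool" where
  "non_crossing T1 T2 \<longleftrightarrow>
     (\<forall>e\<in>snd T1. \<forall>f\<in>snd T2.
        \<not> (\<exists>p. convex hull e \<inter> convex hull f = {p} \<and> p \<notin> e \<and> p \<notin> f))"

text \<open>One step of the merging process on a collection (multiset) of sets: pick two
  distinct elements (occurrences) C, C' with nonempty intersection and replace them by
  phi (C \<union> C').\<close>
definition merge_step :: "('a set \<Rightarrow> 'a set) \<Rightarrow> 'a set multiset \<Rightarrow> 'a set multiset \<Rightarrow> bool" where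
  "merge_step \<phi> \<C> \<C>' \<longleftrightarrow>
     (\<exists>C C'. {#C, C'#} \<subseteq># \<C> \<and> C \<inter> C' \<noteq> {} \<and>
             \<C>' = \<C> - {#C, C'#} + {#\<phi> (C \<union> C')#})"

definition pairwise_disjoint_coll :: "'a set multiset \<Rightarrow> bool" where
  "pairwise_disjoint_coll \<C> \<longleftrightarrow> (\<forall>C C'. {#C, C'#} \<subseteq># \<C> \<longrightarrow> C \<inter> C' = {})"

definition merging_output :: "('a set \<Rightarrow> 'a set) \<Rightarrow> 'a set multiset \<Rightarrow> 'a set multiset \<Rightarrow> bool" where
  "merging_output \<phi> \<C>0 \<C> \<longleftrightarrow> (merge_step \<phi>)\<^sup>*\<^sup>* \<C>0 \<C> \<and> pairwise_disjoint_coll \<C>"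

end

theory Submission
  imports Defs
begin

text \<open>Properties 1 and 2 make \<phi> idempotent, so every set produced by the merging process
  is a nonempty fixed point of \<phi>. If a collection \<D> of pairwise disjoint fixed points
  covers the starting sets (each lies inside a member of \<D>), it keeps covering them along any
  run: two intersecting sets lie in the same member D of \<D>, hence so does \<phi> of their union.
  Applying this to the outputs of two runs, each refines the other; disjointness then forces
  them to consist of the same sets.\<close>

lemma pair_subseteq_mset:
  assumes "a \<noteq> b" "a \<in># M" "b \<in># M"
  shows "{#a, b#} \<subseteq># M"
proof -
  obtain M' where "M = add_mset a M'"
    using multi_member_split[OF assms(2)] ..
  with assms show ?thesis by simp
qed

lemma pairwise_disjoint_collD:
  assumes "pairwise_disjoint_coll \<D>" "X \<in># \<D>" "Y \<in># \<D>" "X \<inter> Y \<noteq> {}"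
  shows "X = Y"
proof (rule ccontr)
  assume "X \<noteq> Y"
  then have "{#X, Y#} \<subseteq># \<D>"
    using assms(2,3) by (rule pair_subseteq_mset)
  with assms(1,4) show False
    unfolding pairwise_disjoint_coll_def by blast
qed

lemma merge_stepE:
  assumes "merge_step \<phi> \<A> \<B>"
  obtains C C' where "C \<in># \<A>" "C' \<in># \<A>" "C \<inter> C' \<noteq> {}" "\<phi> (C \<union> C') \<in># \<B>"
    "\<And>X. X \<in># \<B> \<Longrightarrow> X \<in># \<A> \<or> X = \<phi> (C \<union> C')"
    "\<And>X. X \<in># \<A> \<Longrightarrow> X \<in># \<B> \<or> X = C \<or> X = C'"
proof -
  obtain C C' where sub: "{#C, C'#} \<subseteq># \<A>" and meet: "C \<inter> C' \<noteq> {}"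
    and \<B>: "\<B> = \<A> - {#C, C'#} + {#\<phi> (C \<union> C')#}"
    using assms unfolding merge_step_def by blast
  have "X \<in># \<B> \<or> X = C \<or> X = C'" if "X \<in># \<A>" for X
  proof (cases "X \<in># \<A> - {#C, C'#}")
    case False
    with that have "count {#C, C'#} X > 0"
      by (metis count_greater_zero_iff in_diff_count not_gr_zero)
    then have "X \<in># {#C, C'#}"
      by (simp only: count_greater_zero_iff)
    then show ?thesis by simp
  qed (simp add: \<B>)
  moreover have "C \<in># \<A>" "C' \<in># \<A>"
    using sub by (auto intro: mset_subset_eqD)
  ultimately show thesis
    using meet by (intro that) (auto simp: \<B> dest: in_diffD)
qed

definition coll_refines :: "'a set multiset \<Rightarrow> 'a set multiset \<Rightarrow> bool" where
  "coll_refines \<A> \<B> \<longleftrightarrow> (\<forall>X\<in>#\<A>. \<exists>Y\<in>#\<B>. X \<subseteq> Y)"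

lemma coll_refines_refl: "coll_refines \<A> \<A>"
  unfolding coll_refines_def by blast

lemma coll_refines_trans: "coll_refines \<A> \<B> \<Longrightarrow> coll_refines \<B> \<C> \<Longrightarrow> coll_refines \<A> \<C>"
  unfolding coll_refines_def by (meson order_trans)

lemma set_mset_eq_if_coll_refines_disjoint:
  assumes "coll_refines \<A> \<B>" "coll_refines \<B> \<A>" "pairwise_disjoint_coll \<A>" "pairwise_disjoint_coll \<B>"
    and "{} \<notin># \<A>" "{} \<notin># \<B>"
  shows "set_mset \<A> = set_mset \<B>"
proof -
  have "X \<in># \<Q>"
    if PQ: "coll_refines \<P> \<Q>" and QP: "coll_refines \<Q> \<P>" and disj: "pairwise_disjoint_coll \<P>"
      and ne: "{} \<notin># \<P>" and X: "X \<in># \<P>"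
    for \<P> \<Q> :: "'a set multiset" and X
  proof -
    obtain Y where Y: "Y \<in># \<Q>" "X \<subseteq> Y"
      using PQ X unfolding coll_refines_def by blast
    then obtain X' where X': "X' \<in># \<P>" "Y \<subseteq> X'"
      using QP unfolding coll_refines_def by blast
    have "X \<inter> X' \<noteq> {}"
      using Y(2) X'(2) ne X by (metis Int_absorb2 order_trans)
    then have "X = X'"
      using pairwise_disjoint_collD[OF disj X X'(1)] by blast
    with Y X' have "X = Y" by blast
    with Y show ?thesis by simp
  qed
  with assms show ?thesis by blast
qed

text \<open>Properties 1 and 2; that \<phi> maps nonempty sets to nonempty sets follows from the first.\<close>

locale merging_operator =
  fixes \<phi> :: "'a set \<Rightarrow> 'a set"
  assumes extensive: "A \<noteq> {} \<Longrightarrow> A \<subseteq> \<phi> A"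
    and absorb: "A \<noteq> {} \<Longrightarrow> B \<noteq> {} \<Longrightarrow> A \<subseteq> \<phi> B \<Longrightarrow> \<phi> A \<subseteq> \<phi> B"
begin

lemma image_nonempty: "A \<noteq> {} \<Longrightarrow> \<phi> A \<noteq> {}"
  using extensive by blast

lemma idem: "A \<noteq> {} \<Longrightarrow> \<phi> (\<phi> A) = \<phi> A"
  by (simp add: absorb extensive image_nonempty subset_antisym)

definition closed_coll :: "'a set multiset \<Rightarrow> bool" where
  "closed_coll \<C> \<longleftrightarrow> (\<forall>X\<in>#\<C>. X \<noteq> {} \<and> \<phi> X = X)"

lemma closed_coll_nonempty: "closed_coll \<C> \<Longrightarrow> {} \<notin># \<C>"
  unfolding closed_coll_def by blast

lemma closed_coll_merge_step:
  assumes "merge_step \<phi> \<A> \<B>" "closed_coll \<A>"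
  shows "closed_coll \<B>"
proof -
  obtain C C' where "C \<inter> C' \<noteq> {}" "\<And>X. X \<in># \<B> \<Longrightarrow> X \<in># \<A> \<or> X = \<phi> (C \<union> C')"
    using assms(1) by (rule merge_stepE) blast
  with assms(2) show ?thesis
    unfolding closed_coll_def by (metis Un_empty idem inf_bot_left image_nonempty)
qed

lemma closed_coll_merge_steps:
  "(merge_step \<phi>)\<^sup>*\<^sup>* \<A> \<B> \<Longrightarrow> closed_coll \<A> \<Longrightarrow> closed_coll \<B>"
  by (induction rule: rtranclp_induct) (auto intro: closed_coll_merge_step)

lemma coll_refines_merge_step:
  assumes "merge_step \<phi> \<A> \<B>"
  shows "coll_refines \<A> \<B>"
proof -
  obtain C C' where "C \<inter> C' \<noteq> {}" "\<phi> (C \<union> C') \<in># \<B>"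
    "\<And>X. X \<in># \<A> \<Longrightarrow> X \<in># \<B> \<or> X = C \<or> X = C'"
    using assms by (rule merge_stepE) blast
  moreover have "C \<union> C' \<subseteq> \<phi> (C \<union> C')"
    using \<open>C \<inter> C' \<noteq> {}\<close> by (intro extensive) blast
  ultimately show ?thesis
    unfolding coll_refines_def by blast
qed

lemma coll_refines_merge_steps: "(merge_step \<phi>)\<^sup>*\<^sup>* \<A> \<B> \<Longrightarrow> coll_refines \<A> \<B>"
  by (induction rule: rtranclp_induct)
    (auto intro: coll_refines_refl coll_refines_trans coll_refines_merge_step)

lemma merge_step_preserves_coll_refines:
  assumes "merge_step \<phi> \<A> \<B>" "coll_refines \<A> \<D>" "pairwise_disjoint_coll \<D>" "closed_coll \<D>"
  shows "coll_refines \<B> \<D>"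
proof -
  obtain C C' where meet: "C \<inter> C' \<noteq> {}" and C: "C \<in># \<A>" "C' \<in># \<A>"
    and \<B>: "\<And>X. X \<in># \<B> \<Longrightarrow> X \<in># \<A> \<or> X = \<phi> (C \<union> C')"
    using assms(1) by (rule merge_stepE) blast
  obtain D where D: "D \<in># \<D>" "C \<subseteq> D"
    using assms(2) C(1) unfolding coll_refines_def by blast
  obtain D' where D': "D' \<in># \<D>" "C' \<subseteq> D'"
    using assms(2) C(2) unfolding coll_refines_def by blast
  have "D \<inter> D' \<noteq> {}"
    using meet D(2) D'(2) by blast
  then have "D = D'"
    by (rule pairwise_disjoint_collD[OF assms(3) D(1) D'(1)])
  have D_closed: "D \<noteq> {}" "\<phi> D = D"
    using assms(4) D(1) unfolding closed_coll_def by auto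
  have "C \<union> C' \<noteq> {}"
    using meet by blast
  moreover note \<open>D \<noteq> {}\<close>
  moreover have "C \<union> C' \<subseteq> \<phi> D"
    using D(2) D'(2) \<open>D = D'\<close> D_closed(2) by blast
  ultimately have "\<phi> (C \<union> C') \<subseteq> \<phi> D"
    by (rule absorb)
  with D_closed(2) have merged: "\<phi> (C \<union> C') \<subseteq> D"
    by simp
  show ?thesis
    unfolding coll_refines_def
  proof
    fix X
    assume "X \<in># \<B>"
    then consider "X \<in># \<A>" | "X = \<phi> (C \<union> C')"
      using \<B> by blast
    then show "\<exists>Y\<in>#\<D>. X \<subseteq> Y"
      by cases (use assms(2) D(1) merged in \<open>auto simp: coll_refines_def\<close>)
  qed
qed

lemma merge_steps_preserve_coll_refines:
  assumes "(merge_step \<phi>)\<^sup>*\<^sup>* \<A> \<B>" "coll_refines \<A> \<D>" "pairwise_disjoint_coll \<D>" "closed_coll \<D>"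
  shows "coll_refines \<B> \<D>"
  using assms by (induction rule: rtranclp_induct) (auto intro: merge_step_preserves_coll_refines)

theorem merging_output_unique:
  assumes "closed_coll \<C>0" "merging_output \<phi> \<C>0 \<C>1" "merging_output \<phi> \<C>0 \<C>2"
  shows "set_mset \<C>1 = set_mset \<C>2"
proof -
  have runs: "(merge_step \<phi>)\<^sup>*\<^sup>* \<C>0 \<C>1" "(merge_step \<phi>)\<^sup>*\<^sup>* \<C>0 \<C>2"
    and disjoint: "pairwise_disjoint_coll \<C>1" "pairwise_disjoint_coll \<C>2"
    using assms(2,3) unfolding merging_output_def by auto
  have closed: "closed_coll \<C>1" "closed_coll \<C>2"
    using runs assms(1) by (auto intro: closed_coll_merge_steps)
  have "coll_refines \<C>1 \<C>2" "coll_refines \<C>2 \<C>1"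
    using runs disjoint closed
    by (auto intro: merge_steps_preserve_coll_refines coll_refines_merge_steps)
  with disjoint closed show ?thesis
    by (intro set_mset_eq_if_coll_refines_disjoint closed_coll_nonempty)
qed

end

theorem theorem1:
  fixes \<phi> :: "point set \<Rightarrow> point set"
    and Ts :: "(point set \<times> point set set) list"
  assumes phi_ne: "\<And>A. A \<noteq> {} \<Longrightarrow> \<phi> A \<noteq> {}"
    and prop1: "\<And>A. A \<noteq> {} \<Longrightarrow> A \<subseteq> \<phi> A"
    and prop2: "\<And>A B. A \<noteq> {} \<Longrightarrow> B \<noteq> {} \<Longrightarrow> A \<subseteq> \<phi> B \<Longrightarrow> \<phi> A \<subseteq> \<phi> B"
    and trees: "\<And>T. T \<in> set Ts \<Longrightarrow> plane_tree (fst T) (snd T)"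
    and distinct: "distinct (map (\<lambda>T. geom_tree (fst T) (snd T)) Ts)"
    and noncross: "\<And>i j. i < length Ts \<Longrightarrow> j < length Ts \<Longrightarrow> i \<noteq> j \<Longrightarrow>
                     non_crossing (Ts ! i) (Ts ! j)"
    and run1: "merging_output \<phi> (mset (map (\<lambda>T. \<phi> (geom_tree (fst T) (snd T))) Ts)) \<C>1"
    and run2: "merging_output \<phi> (mset (map (\<lambda>T. \<phi> (geom_tree (fst T) (snd T))) Ts)) \<C>2"
  shows "set_mset \<C>1 = set_mset \<C>2"
proof -
  interpret merging_operator \<phi>
    using prop1 prop2 by unfold_locales
  have "geom_tree (fst T) (snd T) \<noteq> {}" if "T \<in> set Ts" for T
  proof -
    have "fst T \<noteq> {}"
      using trees[OF that] unfolding plane_tree_def by (elim conjE)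
    then show ?thesis
      unfolding geom_tree_def by blast
  qed
  then have "closed_coll (mset (map (\<lambda>T. \<phi> (geom_tree (fst T) (snd T))) Ts))"
    unfolding closed_coll_def by (auto simp: image_nonempty idem)
  then show ?thesis
    using run1 run2 by (rule merging_output_unique)
qed

end
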